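(* Let $(\mathbb{E},\dot I,\dot\otimes)$ with $L\dashv p$ be a weakly closed monoidal refinement of a symmetric monoidal closed category $(\mathbb{B},I,\otimes,\multimap)$, let $\mathcal{T}$ be a $\otimes$-strong monad on $\mathbb{B}$, and let $(M,\le,1,\cdot)$ be a preordered monoid. Then the preordered class $\mathbf{BLift}_{\dot\otimes}(\mathcal{T},M)$ of $M$-graded $\dot\otimes$-parameterized $!$-liftings of $\mathcal{T}$ (with the pointwise preorder) is equivalent, as a preorder, to the preordered class $\mathbf{Asign}_{\dot\otimes}(\mathcal{T},M)$ of $M$-graded $\dot\otimes$-parameterized assignments of $\mathbb{E}$ on $\mathcal{T}$ (with the pointwise preorder).
   Context: Let $(\mathbb{B},I,\otimes,\multimap)$ be a symmetric monoidal closed category with evaluation $ev_{X,Y}:(X\multimap Y)\otimes X\to Y$. A weakly closed monoidal refinement of $\mathbb{B}$ is a symmetric monoidal category $(\mathbb{E},\dot I,\dot\otimes)$ with an adjunction $L\dashv p$, $p:\mathbb{E}\to\mathbb{B}$, $L:\mathbb{B}\to\mathbb{E}$, such that: (a) $p$ is strict symmetric monoidal and faithful; (b) the unit of the adjunction is the identity; (c) for each $X\in\mathbb{B}$, $-\dot\otimes LX$ has a right adjoint $X\dot\pitchfork-$; (d) for each $X$, $(p,p)$ is a map of adjunctions from $(-\dot\otimes LX\dashv X\dot\pitchfork -)$ to $(-\otimes X\dashv X\multimap -)$ (i.e. $p\circ(-\dot\otimes LX)=(-\otimes X)\circ p$, $p\circ(X\dot\pitchfork-)=(X\multimap-)\circ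 p$, and $p$ sends unit to unit). Write $!=L\circ p$. For $X,Y\in\mathbb{E}$ and $f\in\mathbb{B}(pX,pY)$, write $f:X\dot\to Y$ if $f=p\dot f$ for some $\dot f\in\mathbb{E}(X,Y)$. $\mathcal{T}=(T,\eta,(-)^\dagger)$ is a monad (Kleisli triple) on $\mathbb{B}$ with strength $\sigma_{X,Y}:X\otimes TY\to T(X\otimes Y)$; for $f:X\otimes Y\to TZ$ let $f^\ddagger=f^\dagger\circ\sigma_{X,Y}$, and $\mathrm{kl}_{X,Y}=(ev_{X,TY})^\ddagger:(X\multimap TY)\otimes TX\to TY$. For $F:A\to|\mathbb{B}|$, $\mathbf{Ord}(p,F)$ is the class of $G:A\to|\mathbb{E}|$ with $pG(a)=F(a)$, preordered by $G\le G'$ iff $\mathrm{id}_{F(a)}:G(a)\dot\to G'(a)$ for all $a$. An $M$-graded $\dot\otimes$-parameterized $!$-lifting is a monotone $\dot T:(M,\le)\to\mathbf{Ord}(p,T\circ p)$ such that for all $\alpha,\beta\in M$, $X,Y,Z\in\mathbb{E}$ and $\mathbb{B}$-morphisms $f:pZ\otimes pX\to TpY$: if $f:Z\dot\otimes !X\dot\to\dot T\alpha Y$ then $f^\ddagger:Z\dot\otimes\dot T\beta X\dot\to\dot T(\beta\cdot\alpha)Y$. An $M$-graded $\dot\otimes$-parameterized assignment of $\mathbb{E}$ on $\mathcal{T}$ is a monotone $\Delta:(M,\le)\to\mathbf{Ord}(p,T)$ such that for all $\alpha,\beta\in M$ and $X,Y\in\mathbb{B}$, $\mathrm{kl}_{X,Y}:(X\dot\pitchfork\Delta\alpha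 Y)\dot\otimes\Delta\beta X\dot\to\Delta(\beta\cdot\alpha)Y$. *)

theory Defs
  imports Main
begin

section \<open>Categories with a monoidal structure (hom-set encoding)\<close>

text \<open>A category is given by its class of objects, hom-sets (pairwise disjoint,
empty outside the objects), composition (cmp g f = g after f) and identities.\<close>

record ('o,'m) mcat =
  Ob :: "'o set"
  Hom :: "'o \<Rightarrow> 'o \<Rightarrow> 'm set"
  cmp :: "'m \<Rightarrow> 'm \<Rightarrow> 'm"
  idt :: "'o \<Rightarrow> 'm"
  tunit :: "'o"
  tens :: "'o \<Rightarrow> 'o \<Rightarrow> 'o"
  tensm :: "'m \<Rightarrow> 'm \<Rightarrow> 'm"
  asc :: "'o \<Rightarrow> 'o \<Rightarrow> 'o \<Rightarrow> 'm"
  lu :: "'o \<Rightarrow> 'm"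
  ru :: "'o \<Rightarrow> 'm"
  sy :: "'o \<Rightarrow> 'o \<Rightarrow> 'm"

definition category :: "('o,'m) mcat \<Rightarrow> bool" where
  "category C \<longleftrightarrow>
    (\<forall>X Y. (X \<notin> Ob C \<or> Y \<notin> Ob C) \<longrightarrow> Hom C X Y = {}) \<and>
    (\<forall>X Y X' Y'. Hom C X Y \<inter> Hom C X' Y' \<noteq> {} \<longrightarrow> X = X' \<and> Y = Y') \<and>
    (\<forall>X\<in>Ob C. idt C X \<in> Hom C X X) \<and>
    (\<forall>X Y Z f g. f \<in> Hom C X Y \<longrightarrow> g \<in> Hom C Y Z \<longrightarrow> cmp C g f \<in> Hom C X Z) \<and>
    (\<forall>X Y f. f \<in> Hom C X Y \<longrightarrow> cmp C (idt C Y) f = f \<and> cmp C f (idt C X) = f) \<and>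
    (\<forall>W X Y Z f g h. f \<in> Hom C W X \<longrightarrow> g \<in> Hom C X Y \<longrightarrow> h \<in> Hom C Y Z \<longrightarrow>
        cmp C h (cmp C g f) = cmp C (cmp C h g) f)"

definition iso_in :: "('o,'m) mcat \<Rightarrow> 'm \<Rightarrow> 'o \<Rightarrow> 'o \<Rightarrow> bool" where
  "iso_in C f X Y \<longleftrightarrow> f \<in> Hom C X Y \<and>
     (\<exists>g\<in>Hom C Y X. cmp C g f = idt C X \<and> cmp C f g = idt C Y)"

definition monoidal :: "('o,'m) mcat \<Rightarrow> bool" where
  "monoidal C \<longleftrightarrow> category C \<and>
    tunit C \<in> Ob C \<and>
    (\<forall>X\<in>Ob C. \<forall>Y\<in>Ob C. tens C X Y \<in> Ob C) \<and>
    (\<forall>X X' Y Y' f g. f \<in> Hom C X X' \<longrightarrow> g \<in> Hom C Y Y' \<longrightarrow>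
        tensm C f g \<in> Hom C (tens C X Y) (tens C X' Y')) \<and>
    (\<forall>X\<in>Ob C. \<forall>Y\<in>Ob C. tensm C (idt C X) (idt C Y) = idt C (tens C X Y)) \<and>
    (\<forall>X X' X'' Y Y' Y'' f f' g g'. f \<in> Hom C X X' \<longrightarrow> f' \<in> Hom C X' X'' \<longrightarrow>
        g \<in> Hom C Y Y' \<longrightarrow> g' \<in> Hom C Y' Y'' \<longrightarrow>
        tensm C (cmp C f' f) (cmp C g' g) = cmp C (tensm C f' g') (tensm C f g)) \<and>
    (\<forall>X\<in>Ob C. \<forall>Y\<in>Ob C. \<forall>Z\<in>Ob C.
        iso_in C (asc C X Y Z) (tens C (tens C X Y) Z) (tens C X (tens C Y Z))) \<and>
    (\<forall>X X' Y Y' Z Z' f g h. f \<in> Hom C X X' \<longrightarrow> g \<in> Hom C Y Y' \<longrightarrow> h \<in> Hom C Z Z' \<longrightarrow>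
        cmp C (asc C X' Y' Z') (tensm C (tensm C f g) h)
          = cmp C (tensm C f (tensm C g h)) (asc C X Y Z)) \<and>
    (\<forall>X\<in>Ob C. iso_in C (lu C X) (tens C (tunit C) X) X) \<and>
    (\<forall>X X' f. f \<in> Hom C X X' \<longrightarrow>
        cmp C (lu C X') (tensm C (idt C (tunit C)) f) = cmp C f (lu C X)) \<and>
    (\<forall>X\<in>Ob C. iso_in C (ru C X) (tens C X (tunit C)) X) \<and>
    (\<forall>X X' f. f \<in> Hom C X X' \<longrightarrow>
        cmp C (ru C X') (tensm C f (idt C (tunit C))) = cmp C f (ru C X)) \<and>
    (\<forall>W\<in>Ob C. \<forall>X\<in>Ob C. \<forall>Y\<in>Ob C. \<forall>Z\<in>Ob C.
        cmp C (asc C W X (tens C Y Z)) (asc C (tens C W X) Y Z)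
          = cmp C (tensm C (idt C W) (asc C X Y Z))
              (cmp C (asc C W (tens C X Y) Z) (tensm C (asc C W X Y) (idt C Z)))) \<and>
    (\<forall>X\<in>Ob C. \<forall>Y\<in>Ob C.
        cmp C (tensm C (idt C X) (lu C Y)) (asc C X (tunit C) Y) = tensm C (ru C X) (idt C Y))"

definition symmetric_monoidal :: "('o,'m) mcat \<Rightarrow> bool" where
  "symmetric_monoidal C \<longleftrightarrow> monoidal C \<and>
    (\<forall>X\<in>Ob C. \<forall>Y\<in>Ob C. sy C X Y \<in> Hom C (tens C X Y) (tens C Y X)) \<and>
    (\<forall>X X' Y Y' f g. f \<in> Hom C X X' \<longrightarrow> g \<in> Hom C Y Y' \<longrightarrow>
        cmp C (sy C X' Y') (tensm C f g) = cmp C (tensm C g f) (sy C X Y)) \<and>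
    (\<forall>X\<in>Ob C. \<forall>Y\<in>Ob C. cmp C (sy C Y X) (sy C X Y) = idt C (tens C X Y)) \<and>
    (\<forall>X\<in>Ob C. \<forall>Y\<in>Ob C. \<forall>Z\<in>Ob C.
        cmp C (asc C Y Z X) (cmp C (sy C X (tens C Y Z)) (asc C X Y Z))
          = cmp C (tensm C (idt C Y) (sy C X Z))
              (cmp C (asc C Y X Z) (tensm C (sy C X Y) (idt C Z))))"

text \<open>Right adjoint \<open>ih\<close> of \<open>- \<otimes> K\<close>, presented by its counit \<open>ev\<close> and the
universal property.\<close>

definition is_right_adj ::
  "('o,'m) mcat \<Rightarrow> 'o \<Rightarrow> ('o \<Rightarrow> 'o) \<Rightarrow> ('o \<Rightarrow> 'm) \<Rightarrow> bool" where
  "is_right_adj C K ih ev \<longleftrightarrow>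
    (\<forall>A\<in>Ob C. ih A \<in> Ob C \<and> ev A \<in> Hom C (tens C (ih A) K) A \<and>
       (\<forall>Z\<in>Ob C. \<forall>f\<in>Hom C (tens C Z K) A.
          \<exists>!g. g \<in> Hom C Z (ih A) \<and> cmp C (ev A) (tensm C g (idt C K)) = f))"

definition radj_map ::
  "('o,'m) mcat \<Rightarrow> 'o \<Rightarrow> ('o \<Rightarrow> 'o) \<Rightarrow> ('o \<Rightarrow> 'm) \<Rightarrow> 'o \<Rightarrow> 'o \<Rightarrow> 'm \<Rightarrow> 'm" where
  "radj_map C K ih ev A A' h = (THE g. g \<in> Hom C (ih A) (ih A') \<and>
      cmp C (ev A') (tensm C g (idt C K)) = cmp C h (ev A))"

definition radj_unit ::
  "('o,'m) mcat \<Rightarrow> 'o \<Rightarrow> ('o \<Rightarrow> 'o) \<Rightarrow> ('o \<Rightarrow> 'm) \<Rightarrow> 'o \<Rightarrow> 'm" where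
  "radj_unit C K ih ev Z = (THE g. g \<in> Hom C Z (ih (tens C Z K)) \<and>
      cmp C (ev (tens C Z K)) (tensm C g (idt C K)) = idt C (tens C Z K))"

definition sym_monoidal_closed ::
  "('o,'m) mcat \<Rightarrow> ('o \<Rightarrow> 'o \<Rightarrow> 'o) \<Rightarrow> ('o \<Rightarrow> 'o \<Rightarrow> 'm) \<Rightarrow> bool" where
  "sym_monoidal_closed C ihom ev \<longleftrightarrow> symmetric_monoidal C \<and>
     (\<forall>X\<in>Ob C. is_right_adj C X (ihom X) (ev X))"

definition is_functor ::
  "('o,'m) mcat \<Rightarrow> ('p,'n) mcat \<Rightarrow> ('o \<Rightarrow> 'p) \<Rightarrow> ('m \<Rightarrow> 'n) \<Rightarrow> bool" where
  "is_functor C D Fo Fm \<longleftrightarrow>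
    (\<forall>X\<in>Ob C. Fo X \<in> Ob D) \<and>
    (\<forall>X Y f. f \<in> Hom C X Y \<longrightarrow> Fm f \<in> Hom D (Fo X) (Fo Y)) \<and>
    (\<forall>X\<in>Ob C. Fm (idt C X) = idt D (Fo X)) \<and>
    (\<forall>X Y Z f g. f \<in> Hom C X Y \<longrightarrow> g \<in> Hom C Y Z \<longrightarrow> Fm (cmp C g f) = cmp D (Fm g) (Fm f))"

definition faithful ::
  "('o,'m) mcat \<Rightarrow> ('m \<Rightarrow> 'n) \<Rightarrow> bool" where
  "faithful C Fm \<longleftrightarrow> (\<forall>X Y. inj_on Fm (Hom C X Y))"

definition strict_sym_monoidal_functor ::
  "('o,'m) mcat \<Rightarrow> ('p,'n) mcat \<Rightarrow> ('o \<Rightarrow> 'p) \<Rightarrow> ('m \<Rightarrow> 'n) \<Rightarrow> bool" where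
  "strict_sym_monoidal_functor C D Fo Fm \<longleftrightarrow> is_functor C D Fo Fm \<and>
    Fo (tunit C) = tunit D \<and>
    (\<forall>X\<in>Ob C. \<forall>Y\<in>Ob C. Fo (tens C X Y) = tens D (Fo X) (Fo Y)) \<and>
    (\<forall>X X' Y Y' f g. f \<in> Hom C X X' \<longrightarrow> g \<in> Hom C Y Y' \<longrightarrow>
        Fm (tensm C f g) = tensm D (Fm f) (Fm g)) \<and>
    (\<forall>X\<in>Ob C. \<forall>Y\<in>Ob C. \<forall>Z\<in>Ob C. Fm (asc C X Y Z) = asc D (Fo X) (Fo Y) (Fo Z)) \<and>
    (\<forall>X\<in>Ob C. Fm (lu C X) = lu D (Fo X)) \<and>
    (\<forall>X\<in>Ob C. Fm (ru C X) = ru D (Fo X)) \<and>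
    (\<forall>X\<in>Ob C. \<forall>Y\<in>Ob C. Fm (sy C X Y) = sy D (Fo X) (Fo Y))"

text \<open>\<open>B\<close> symmetric monoidal closed (internal hom \<open>ihom\<close>, evaluation \<open>ev\<close>);
\<open>E\<close> symmetric monoidal; \<open>p = (po,pm)\<close>, \<open>L = (Lo,Lm)\<close> with \<open>L \<turnstile> p\<close> with identity unit;
\<open>pitch X\<close> is the right adjoint of \<open>- \<otimes> L X\<close> with counit \<open>evE X\<close>.\<close>

definition wc_refinement ::
  "('bo,'bm) mcat \<Rightarrow> ('bo \<Rightarrow> 'bo \<Rightarrow> 'bo) \<Rightarrow> ('bo \<Rightarrow> 'bo \<Rightarrow> 'bm) \<Rightarrow>
   ('eo,'em) mcat \<Rightarrow> ('eo \<Rightarrow> 'bo) \<Rightarrow> ('em \<Rightarrow> 'bm) \<Rightarrow> ('bo \<Rightarrow> 'eo) \<Rightarrow> ('bm \<Rightarrow> 'em) \<Rightarrow>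
   ('bo \<Rightarrow> 'eo \<Rightarrow> 'eo) \<Rightarrow> ('bo \<Rightarrow> 'eo \<Rightarrow> 'em) \<Rightarrow> bool" where
  "wc_refinement B ihom ev E po pm Lo Lm pitch evE \<longleftrightarrow>
    sym_monoidal_closed B ihom ev \<and> symmetric_monoidal E \<and>
    \<comment> \<open>(a)\<close>
    strict_sym_monoidal_functor E B po pm \<and> faithful E pm \<and>
    \<comment> \<open>the adjunction \<open>L \<turnstile> p\<close> with identity unit\<close>
    is_functor B E Lo Lm \<and>
    (\<forall>X\<in>Ob B. po (Lo X) = X) \<and>
    (\<forall>X Y f. f \<in> Hom B X Y \<longrightarrow> pm (Lm f) = f) \<and>
    (\<forall>X\<in>Ob B. \<forall>A\<in>Ob E. \<forall>f\<in>Hom B X (po A). \<exists>!g. g \<in> Hom E (Lo X) A \<and> pm g = f) \<and>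
    \<comment> \<open>(c)\<close>
    (\<forall>X\<in>Ob B. is_right_adj E (Lo X) (pitch X) (evE X)) \<and>
    \<comment> \<open>(d)\<close>
    (\<forall>X\<in>Ob B. \<forall>Z\<in>Ob E. po (tens E Z (Lo X)) = tens B (po Z) X) \<and>
    (\<forall>X\<in>Ob B. \<forall>Z Z' h. h \<in> Hom E Z Z' \<longrightarrow>
        pm (tensm E h (idt E (Lo X))) = tensm B (pm h) (idt B X)) \<and>
    (\<forall>X\<in>Ob B. \<forall>A\<in>Ob E. po (pitch X A) = ihom X (po A)) \<and>
    (\<forall>X\<in>Ob B. \<forall>A A' h. h \<in> Hom E A A' \<longrightarrow>
        pm (radj_map E (Lo X) (pitch X) (evE X) A A' h)
          = radj_map B X (ihom X) (ev X) (po A) (po A') (pm h)) \<and>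
    (\<forall>X\<in>Ob B. \<forall>Z\<in>Ob E.
        pm (radj_unit E (Lo X) (pitch X) (evE X) Z) = radj_unit B X (ihom X) (ev X) (po Z))"

section \<open>Strong monads (Kleisli triples with strength)\<close>

definition strong_monad ::
  "('bo,'bm) mcat \<Rightarrow> ('bo \<Rightarrow> 'bo) \<Rightarrow> ('bo \<Rightarrow> 'bm) \<Rightarrow> ('bm \<Rightarrow> 'bm) \<Rightarrow>
   ('bo \<Rightarrow> 'bo \<Rightarrow> 'bm) \<Rightarrow> bool" where
  "strong_monad B T eta kext sigma \<longleftrightarrow>
    (\<forall>X\<in>Ob B. T X \<in> Ob B \<and> eta X \<in> Hom B X (T X)) \<and>
    (\<forall>X Y f. f \<in> Hom B X (T Y) \<longrightarrow> kext f \<in> Hom B (T X) (T Y)) \<and>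
    (\<forall>X\<in>Ob B. kext (eta X) = idt B (T X)) \<and>
    (\<forall>X Y f. f \<in> Hom B X (T Y) \<longrightarrow> cmp B (kext f) (eta X) = f) \<and>
    (\<forall>X Y Z f g. f \<in> Hom B X (T Y) \<longrightarrow> g \<in> Hom B Y (T Z) \<longrightarrow>
        cmp B (kext g) (kext f) = kext (cmp B (kext g) f)) \<and>
    \<comment> \<open>strength\<close>
    (\<forall>X\<in>Ob B. \<forall>Y\<in>Ob B. sigma X Y \<in> Hom B (tens B X (T Y)) (T (tens B X Y))) \<and>
    (\<forall>X X' Y g. g \<in> Hom B X X' \<longrightarrow> Y \<in> Ob B \<longrightarrow>
        cmp B (sigma X' Y) (tensm B g (idt B (T Y)))
          = cmp B (kext (cmp B (eta (tens B X' Y)) (tensm B g (idt B Y)))) (sigma X Y)) \<and>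
    (\<forall>X\<in>Ob B. cmp B (kext (cmp B (eta X) (lu B X))) (sigma (tunit B) X) = lu B (T X)) \<and>
    (\<forall>X\<in>Ob B. \<forall>Y\<in>Ob B. \<forall>Z\<in>Ob B.
        cmp B (kext (cmp B (eta (tens B X (tens B Y Z))) (asc B X Y Z))) (sigma (tens B X Y) Z)
          = cmp B (sigma X (tens B Y Z)) (cmp B (tensm B (idt B X) (sigma Y Z)) (asc B X Y (T Z)))) \<and>
    (\<forall>X\<in>Ob B. \<forall>Y\<in>Ob B. cmp B (sigma X Y) (tensm B (idt B X) (eta Y)) = eta (tens B X Y)) \<and>
    (\<forall>X\<in>Ob B. \<forall>Y Z f. f \<in> Hom B Y (T Z) \<longrightarrow>
        cmp B (sigma X Z) (tensm B (idt B X) (kext f))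
          = cmp B (kext (cmp B (sigma X Z) (tensm B (idt B X) f))) (sigma X Y))"

definition kl ::
  "('bo,'bm) mcat \<Rightarrow> ('bo \<Rightarrow> 'bo \<Rightarrow> 'bo) \<Rightarrow> ('bo \<Rightarrow> 'bo \<Rightarrow> 'bm) \<Rightarrow> ('bo \<Rightarrow> 'bo) \<Rightarrow>
   ('bm \<Rightarrow> 'bm) \<Rightarrow> ('bo \<Rightarrow> 'bo \<Rightarrow> 'bm) \<Rightarrow> 'bo \<Rightarrow> 'bo \<Rightarrow> 'bm" where
  "kl B ihom ev T kext sigma X Y = cmp B (kext (ev X (T Y))) (sigma (ihom X (T Y)) X)"

definition preordered_monoid :: "('g \<Rightarrow> 'g \<Rightarrow> bool) \<Rightarrow> 'g \<Rightarrow> ('g \<Rightarrow> 'g \<Rightarrow> 'g) \<Rightarrow> bool" where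
  "preordered_monoid le one mult \<longleftrightarrow>
    (\<forall>a. le a a) \<and> (\<forall>a b c. le a b \<longrightarrow> le b c \<longrightarrow> le a c) \<and>
    (\<forall>a b c. mult (mult a b) c = mult a (mult b c)) \<and>
    (\<forall>a. mult one a = a \<and> mult a one = a) \<and>
    (\<forall>a a' b b'. le a a' \<longrightarrow> le b b' \<longrightarrow> le (mult a b) (mult a' b'))"

definition lifts :: "('eo,'em) mcat \<Rightarrow> ('em \<Rightarrow> 'bm) \<Rightarrow> 'eo \<Rightarrow> 'eo \<Rightarrow> 'bm \<Rightarrow> bool" where
  "lifts E pm X Y f \<longleftrightarrow> (\<exists>g\<in>Hom E X Y. pm g = f)"

definition ord_mem :: "('eo,'em) mcat \<Rightarrow> ('eo \<Rightarrow> 'bo) \<Rightarrow> 'a set \<Rightarrow> ('a \<Rightarrow> 'bo) \<Rightarrow> ('a \<Rightarrow> 'eo) \<Rightarrow> bool" where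
  "ord_mem E po A F G \<longleftrightarrow> (\<forall>a\<in>A. G a \<in> Ob E \<and> po (G a) = F a)"

definition ord_le :: "('bo,'bm) mcat \<Rightarrow> ('eo,'em) mcat \<Rightarrow> ('em \<Rightarrow> 'bm) \<Rightarrow> 'a set \<Rightarrow>
    ('a \<Rightarrow> 'bo) \<Rightarrow> ('a \<Rightarrow> 'eo) \<Rightarrow> ('a \<Rightarrow> 'eo) \<Rightarrow> bool" where
  "ord_le B E pm A F G G' \<longleftrightarrow> (\<forall>a\<in>A. lifts E pm (G a) (G' a) (idt B (F a)))"

definition BLift ::
  "('bo,'bm) mcat \<Rightarrow> ('eo,'em) mcat \<Rightarrow> ('eo \<Rightarrow> 'bo) \<Rightarrow> ('em \<Rightarrow> 'bm) \<Rightarrow> ('bo \<Rightarrow> 'eo) \<Rightarrow>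
   ('bo \<Rightarrow> 'bo) \<Rightarrow> ('bm \<Rightarrow> 'bm) \<Rightarrow> ('bo \<Rightarrow> 'bo \<Rightarrow> 'bm) \<Rightarrow>
   ('g \<Rightarrow> 'g \<Rightarrow> bool) \<Rightarrow> ('g \<Rightarrow> 'g \<Rightarrow> 'g) \<Rightarrow> ('g \<Rightarrow> 'eo \<Rightarrow> 'eo) set" where
  "BLift B E po pm Lo T kext sigma le mult = {Td.
     (\<forall>a. ord_mem E po (Ob E) (\<lambda>X. T (po X)) (Td a)) \<and>
     (\<forall>a b. le a b \<longrightarrow> ord_le B E pm (Ob E) (\<lambda>X. T (po X)) (Td a) (Td b)) \<and>
     (\<forall>a b X Y Z f. X \<in> Ob E \<longrightarrow> Y \<in> Ob E \<longrightarrow> Z \<in> Ob E \<longrightarrow>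
        f \<in> Hom B (tens B (po Z) (po X)) (T (po Y)) \<longrightarrow>
        lifts E pm (tens E Z (Lo (po X))) (Td a Y) f \<longrightarrow>
        lifts E pm (tens E Z (Td b X)) (Td (mult b a) Y)
          (cmp B (kext f) (sigma (po Z) (po X))))}"

definition blift_le ::
  "('bo,'bm) mcat \<Rightarrow> ('eo,'em) mcat \<Rightarrow> ('eo \<Rightarrow> 'bo) \<Rightarrow> ('em \<Rightarrow> 'bm) \<Rightarrow> ('bo \<Rightarrow> 'bo) \<Rightarrow>
   ('g \<Rightarrow> 'eo \<Rightarrow> 'eo) \<Rightarrow> ('g \<Rightarrow> 'eo \<Rightarrow> 'eo) \<Rightarrow> bool" where
  "blift_le B E po pm T Td Td' \<longleftrightarrow>
     (\<forall>a. ord_le B E pm (Ob E) (\<lambda>X. T (po X)) (Td a) (Td' a))"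

definition Asign ::
  "('bo,'bm) mcat \<Rightarrow> ('bo \<Rightarrow> 'bo \<Rightarrow> 'bo) \<Rightarrow> ('bo \<Rightarrow> 'bo \<Rightarrow> 'bm) \<Rightarrow>
   ('eo,'em) mcat \<Rightarrow> ('eo \<Rightarrow> 'bo) \<Rightarrow> ('em \<Rightarrow> 'bm) \<Rightarrow> ('bo \<Rightarrow> 'eo \<Rightarrow> 'eo) \<Rightarrow>
   ('bo \<Rightarrow> 'bo) \<Rightarrow> ('bm \<Rightarrow> 'bm) \<Rightarrow> ('bo \<Rightarrow> 'bo \<Rightarrow> 'bm) \<Rightarrow>
   ('g \<Rightarrow> 'g \<Rightarrow> bool) \<Rightarrow> ('g \<Rightarrow> 'g \<Rightarrow> 'g) \<Rightarrow> ('g \<Rightarrow> 'bo \<Rightarrow> 'eo) set" where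
  "Asign B ihom ev E po pm pitch T kext sigma le mult = {D.
     (\<forall>a. ord_mem E po (Ob B) T (D a)) \<and>
     (\<forall>a b. le a b \<longrightarrow> ord_le B E pm (Ob B) T (D a) (D b)) \<and>
     (\<forall>a b X Y. X \<in> Ob B \<longrightarrow> Y \<in> Ob B \<longrightarrow>
        lifts E pm (tens E (pitch X (D a Y)) (D b X)) (D (mult b a) Y)
          (kl B ihom ev T kext sigma X Y))}"

definition asign_le ::
  "('bo,'bm) mcat \<Rightarrow> ('eo,'em) mcat \<Rightarrow> ('em \<Rightarrow> 'bm) \<Rightarrow> ('bo \<Rightarrow> 'bo) \<Rightarrow>
   ('g \<Rightarrow> 'bo \<Rightarrow> 'eo) \<Rightarrow> ('g \<Rightarrow> 'bo \<Rightarrow> 'eo) \<Rightarrow> bool" where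
  "asign_le B E pm T D D' \<longleftrightarrow> (\<forall>a. ord_le B E pm (Ob B) T (D a) (D' a))"

definition preorder_equiv :: "'a set \<Rightarrow> ('a \<Rightarrow> 'a \<Rightarrow> bool) \<Rightarrow> 'b set \<Rightarrow> ('b \<Rightarrow> 'b \<Rightarrow> bool) \<Rightarrow> bool" where
  "preorder_equiv S R S' R' \<longleftrightarrow> (\<exists>\<Phi> \<Psi>.
     (\<forall>x\<in>S. \<Phi> x \<in> S') \<and> (\<forall>y\<in>S'. \<Psi> y \<in> S) \<and>
     (\<forall>x\<in>S. \<forall>x'\<in>S. R x x' \<longrightarrow> R' (\<Phi> x) (\<Phi> x')) \<and>
     (\<forall>y\<in>S'. \<forall>y'\<in>S'. R' y y' \<longrightarrow> R (\<Psi> y) (\<Psi> y')) \<and>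
     (\<forall>x\<in>S. R (\<Psi> (\<Phi> x)) x \<and> R x (\<Psi> (\<Phi> x))) \<and>
     (\<forall>y\<in>S'. R' (\<Phi> (\<Psi> y)) y \<and> R' y (\<Phi> (\<Psi> y))))"

end

theory Submission
  imports Defs
begin

text \<open>Liftings and assignments correspond by restriction along \<open>L\<close> and extension
  along \<open>p\<close>: \<open>\<Delta> \<alpha> X = T\<^sup>. \<alpha> (L X)\<close> and \<open>T\<^sup>. \<alpha> Y = \<Delta> \<alpha> (p Y)\<close>. Because \<open>p\<close> carries
  transposes and counits of \<open>- \<otimes>\<^sup>. L X \<stileturn> X \<pitchfork>\<^sup>. -\<close> to those of \<open>- \<otimes> X \<stileturn> X \<multimap> -\<close>, the
  assignment condition on \<open>kl\<close> is the lifting condition at the counit, and conversely the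
  lifting condition at \<open>f\<close> is the assignment condition precomposed with the transpose
  \<open>\<Lambda>f\<close> of \<open>f\<close>, since \<open>kl \<circ> (\<Lambda>f \<otimes> id) = f\<^sup>\<ddagger>\<close>. Restricting an extension gives back the
  assignment because \<open>p L = Id\<close>; extending a restriction gives back the lifting up to
  vertical identities, because the lifting condition at \<open>\<eta> \<circ> \<lambda>\<close> (with grade \<open>1\<close>)
  shows that \<open>T\<^sup>. \<beta> Y\<close> depends only on \<open>p Y\<close>.\<close>

lemma cat_dom_ob: "category C \<Longrightarrow> f \<in> Hom C X Y \<Longrightarrow> X \<in> Ob C"
  unfolding category_def by (metis empty_iff)

lemma cat_cod_ob: "category C \<Longrightarrow> f \<in> Hom C X Y \<Longrightarrow> Y \<in> Ob C"
  unfolding category_def by (metis empty_iff)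

lemma cat_idt_hom: "category C \<Longrightarrow> X \<in> Ob C \<Longrightarrow> idt C X \<in> Hom C X X"
  unfolding category_def by blast

lemma cat_cmp_hom:
  "category C \<Longrightarrow> f \<in> Hom C X Y \<Longrightarrow> g \<in> Hom C Y Z \<Longrightarrow> cmp C g f \<in> Hom C X Z"
  unfolding category_def by blast

lemma cat_idt_left: "category C \<Longrightarrow> f \<in> Hom C X Y \<Longrightarrow> cmp C (idt C Y) f = f"
  unfolding category_def by blast

lemma cat_idt_right: "category C \<Longrightarrow> f \<in> Hom C X Y \<Longrightarrow> cmp C f (idt C X) = f"
  unfolding category_def by blast

lemma cat_assoc:
  "category C \<Longrightarrow> f \<in> Hom C W X \<Longrightarrow> g \<in> Hom C X Y \<Longrightarrow> h \<in> Hom C Y Z \<Longrightarrow>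
    cmp C h (cmp C g f) = cmp C (cmp C h g) f"
  unfolding category_def by blast

lemma monoidal_category: "monoidal C \<Longrightarrow> category C"
  by (simp add: monoidal_def)

lemma monoidal_tunit_ob: "monoidal C \<Longrightarrow> tunit C \<in> Ob C"
  by (simp add: monoidal_def)

lemma monoidal_tens_ob: "monoidal C \<Longrightarrow> X \<in> Ob C \<Longrightarrow> Y \<in> Ob C \<Longrightarrow> tens C X Y \<in> Ob C"
  by (simp add: monoidal_def)

lemma monoidal_tensm_hom:
  "monoidal C \<Longrightarrow> f \<in> Hom C X X' \<Longrightarrow> g \<in> Hom C Y Y' \<Longrightarrow>
    tensm C f g \<in> Hom C (tens C X Y) (tens C X' Y')"
  unfolding monoidal_def by (elim conjE) blast

lemma monoidal_tensm_idt:
  "monoidal C \<Longrightarrow> X \<in> Ob C \<Longrightarrow> Y \<in> Ob C \<Longrightarrow> tensm C (idt C X) (idt C Y) = idt C (tens C X Y)"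
  unfolding monoidal_def by (elim conjE) blast

lemma monoidal_tensm_cmp:
  "monoidal C \<Longrightarrow> f \<in> Hom C X X' \<Longrightarrow> f' \<in> Hom C X' X'' \<Longrightarrow>
    g \<in> Hom C Y Y' \<Longrightarrow> g' \<in> Hom C Y' Y'' \<Longrightarrow>
    tensm C (cmp C f' f) (cmp C g' g) = cmp C (tensm C f' g') (tensm C f g)"
  unfolding monoidal_def by (elim conjE) blast

lemma monoidal_lu_iso: "monoidal C \<Longrightarrow> X \<in> Ob C \<Longrightarrow> iso_in C (lu C X) (tens C (tunit C) X) X"
  by (simp add: monoidal_def)

lemma monoidal_tensm_cmp_idt:
  assumes "monoidal C" "f \<in> Hom C X X'" "f' \<in> Hom C X' X''" "K \<in> Ob C"
  shows "tensm C (cmp C f' f) (idt C K) = cmp C (tensm C f' (idt C K)) (tensm C f (idt C K))"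
proof -
  have c: "category C" using assms(1) by (rule monoidal_category)
  have idK: "idt C K \<in> Hom C K K" using cat_idt_hom[OF c assms(4)] .
  have "tensm C (cmp C f' f) (idt C K) = tensm C (cmp C f' f) (cmp C (idt C K) (idt C K))"
    using cat_idt_left[OF c idK] by simp
  also have "\<dots> = cmp C (tensm C f' (idt C K)) (tensm C f (idt C K))"
    using monoidal_tensm_cmp[OF assms(1-3) idK idK] .
  finally show ?thesis .
qed

section \<open>Transposition along a right adjoint\<close>

definition radj_transpose ::
  "('o,'m) mcat \<Rightarrow> 'o \<Rightarrow> ('o \<Rightarrow> 'o) \<Rightarrow> ('o \<Rightarrow> 'm) \<Rightarrow> 'o \<Rightarrow> 'o \<Rightarrow> 'm \<Rightarrow> 'm" where
  "radj_transpose C K ih ev Z A h =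
     cmp C (radj_map C K ih ev (tens C Z K) A h) (radj_unit C K ih ev Z)"

lemma is_right_adj_counit:
  "is_right_adj C K ih ev \<Longrightarrow> A \<in> Ob C \<Longrightarrow> ih A \<in> Ob C \<and> ev A \<in> Hom C (tens C (ih A) K) A"
  unfolding is_right_adj_def by blast

lemma is_right_adj_unique:
  assumes "is_right_adj C K ih ev" "Z \<in> Ob C" "h \<in> Hom C (tens C Z K) A" "A \<in> Ob C"
  shows "\<exists>!g. g \<in> Hom C Z (ih A) \<and> cmp C (ev A) (tensm C g (idt C K)) = h"
  using assms unfolding is_right_adj_def by blast

lemma radj_map_spec:
  assumes C: "category C" and adj: "is_right_adj C K ih ev" and h: "h \<in> Hom C A A'"
  shows "radj_map C K ih ev A A' h \<in> Hom C (ih A) (ih A') \<and>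
         cmp C (ev A') (tensm C (radj_map C K ih ev A A' h) (idt C K)) = cmp C h (ev A)"
proof -
  have ihA: "ih A \<in> Ob C" and evA: "ev A \<in> Hom C (tens C (ih A) K) A"
    using is_right_adj_counit[OF adj cat_dom_ob[OF C h]] by auto
  show ?thesis unfolding radj_map_def
    by (rule theI') (rule is_right_adj_unique[OF adj ihA cat_cmp_hom[OF C evA h] cat_cod_ob[OF C h]])
qed

lemma radj_unit_spec:
  assumes M: "monoidal C" and adj: "is_right_adj C K ih ev" and "K \<in> Ob C" "Z \<in> Ob C"
  shows "radj_unit C K ih ev Z \<in> Hom C Z (ih (tens C Z K)) \<and>
         cmp C (ev (tens C Z K)) (tensm C (radj_unit C K ih ev Z) (idt C K)) = idt C (tens C Z K)"
proof -
  have ZK: "tens C Z K \<in> Ob C" using monoidal_tens_ob[OF M] assms by blast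
  show ?thesis unfolding radj_unit_def
    by (rule theI') (rule is_right_adj_unique[OF adj \<open>Z \<in> Ob C\<close>
          cat_idt_hom[OF monoidal_category[OF M] ZK] ZK])
qed

lemma radj_transpose_hom:
  assumes "monoidal C" "is_right_adj C K ih ev" "K \<in> Ob C" "Z \<in> Ob C"
    and "h \<in> Hom C (tens C Z K) A"
  shows "radj_transpose C K ih ev Z A h \<in> Hom C Z (ih A)"
  unfolding radj_transpose_def
  using cat_cmp_hom[OF monoidal_category[OF assms(1)]
      conjunct1[OF radj_unit_spec[OF assms(1-4)]]
      conjunct1[OF radj_map_spec[OF monoidal_category[OF assms(1)] assms(2,5)]]] .

text \<open>Naturality of the counit and the triangle identity \<open>ev \<circ> (unit \<otimes> id) = id\<close> give
  back \<open>h\<close>.\<close>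
lemma radj_transpose_counit:
  assumes M: "monoidal C" and adj: "is_right_adj C K ih ev" and K: "K \<in> Ob C"
    and Z: "Z \<in> Ob C" and h: "h \<in> Hom C (tens C Z K) A"
  shows "cmp C (ev A) (tensm C (radj_transpose C K ih ev Z A h) (idt C K)) = h"
proof -
  have C: "category C" using M by (rule monoidal_category)
  define g where "g = radj_map C K ih ev (tens C Z K) A h"
  define u where "u = radj_unit C K ih ev Z"
  have g: "g \<in> Hom C (ih (tens C Z K)) (ih A)"
    and g_ev: "cmp C (ev A) (tensm C g (idt C K)) = cmp C h (ev (tens C Z K))"
    using radj_map_spec[OF C adj h] unfolding g_def by auto
  have u: "u \<in> Hom C Z (ih (tens C Z K))"
    and u_ev: "cmp C (ev (tens C Z K)) (tensm C u (idt C K)) = idt C (tens C Z K)"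
    using radj_unit_spec[OF M adj K Z] unfolding u_def by auto
  have idK: "idt C K \<in> Hom C K K" using cat_idt_hom[OF C K] .
  have ut: "tensm C u (idt C K) \<in> Hom C (tens C Z K) (tens C (ih (tens C Z K)) K)"
    using monoidal_tensm_hom[OF M u idK] .
  have gt: "tensm C g (idt C K) \<in> Hom C (tens C (ih (tens C Z K)) K) (tens C (ih A) K)"
    using monoidal_tensm_hom[OF M g idK] .
  have evA: "ev A \<in> Hom C (tens C (ih A) K) A"
    using is_right_adj_counit[OF adj cat_cod_ob[OF C h]] by blast
  have evZK: "ev (tens C Z K) \<in> Hom C (tens C (ih (tens C Z K)) K) (tens C Z K)"
    using is_right_adj_counit[OF adj cat_dom_ob[OF C h]] by blast
  have "cmp C (ev A) (tensm C (cmp C g u) (idt C K))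
      = cmp C (cmp C (ev A) (tensm C g (idt C K))) (tensm C u (idt C K))"
    using monoidal_tensm_cmp_idt[OF M u g K] cat_assoc[OF C ut gt evA] by simp
  also have "\<dots> = cmp C h (cmp C (ev (tens C Z K)) (tensm C u (idt C K)))"
    using g_ev cat_assoc[OF C ut evZK h] by simp
  also have "\<dots> = h" using u_ev cat_idt_right[OF C h] by simp
  finally show ?thesis unfolding radj_transpose_def g_def u_def .
qed

lemma radj_transpose_counit_self:
  assumes M: "monoidal C" and adj: "is_right_adj C K ih ev" and K: "K \<in> Ob C"
    and A: "A \<in> Ob C"
  shows "radj_transpose C K ih ev (ih A) A (ev A) = idt C (ih A)"
proof -
  have C: "category C" using M by (rule monoidal_category)
  have ihA: "ih A \<in> Ob C" and evA: "ev A \<in> Hom C (tens C (ih A) K) A"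
    using is_right_adj_counit[OF adj A] by auto
  have "cmp C (ev A) (tensm C (idt C (ih A)) (idt C K)) = ev A"
    using monoidal_tensm_idt[OF M ihA K] cat_idt_right[OF C evA] by simp
  then show ?thesis
    using is_right_adj_unique[OF adj ihA evA A] cat_idt_hom[OF C ihA]
      radj_transpose_hom[OF M adj K ihA evA] radj_transpose_counit[OF M adj K ihA evA]
    by blast
qed

lemma sym_monoidal_closed_monoidal: "sym_monoidal_closed C ih ev \<Longrightarrow> monoidal C"
  unfolding sym_monoidal_closed_def symmetric_monoidal_def by blast

lemma sym_monoidal_closed_adj:
  "sym_monoidal_closed C ih ev \<Longrightarrow> X \<in> Ob C \<Longrightarrow> is_right_adj C X (ih X) (ev X)"
  unfolding sym_monoidal_closed_def by blast

context
  fixes B :: "('bo,'bm) mcat" and T eta kext sigma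
  assumes monad: "strong_monad B T eta kext sigma"
begin

lemma T_ob: "X \<in> Ob B \<Longrightarrow> T X \<in> Ob B"
  using monad unfolding strong_monad_def by auto

lemma eta_hom: "X \<in> Ob B \<Longrightarrow> eta X \<in> Hom B X (T X)"
  using monad unfolding strong_monad_def by auto

lemma kext_hom: "f \<in> Hom B X (T Y) \<Longrightarrow> kext f \<in> Hom B (T X) (T Y)"
  using monad unfolding strong_monad_def by auto

lemma kext_eta: "f \<in> Hom B X (T Y) \<Longrightarrow> cmp B (kext f) (eta X) = f"
  using monad unfolding strong_monad_def by auto

lemma kext_cmp:
  "f \<in> Hom B X (T Y) \<Longrightarrow> g \<in> Hom B Y (T Z) \<Longrightarrow> cmp B (kext g) (kext f) = kext (cmp B (kext g) f)"
  using monad unfolding strong_monad_def by auto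

lemma sigma_hom:
  "X \<in> Ob B \<Longrightarrow> Y \<in> Ob B \<Longrightarrow> sigma X Y \<in> Hom B (tens B X (T Y)) (T (tens B X Y))"
  using monad unfolding strong_monad_def by auto

lemma sigma_natural:
  "g \<in> Hom B X X' \<Longrightarrow> Y \<in> Ob B \<Longrightarrow>
    cmp B (sigma X' Y) (tensm B g (idt B (T Y)))
      = cmp B (kext (cmp B (eta (tens B X' Y)) (tensm B g (idt B Y)))) (sigma X Y)"
  using monad unfolding strong_monad_def by auto

lemma sigma_lu:
  "X \<in> Ob B \<Longrightarrow> cmp B (kext (cmp B (eta X) (lu B X))) (sigma (tunit B) X) = lu B (T X)"
  using monad unfolding strong_monad_def by auto

lemma kext_sigma_natural:
  assumes M: "monoidal B" and g: "g \<in> Hom B Z W" and X: "X \<in> Ob B"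
    and h: "h \<in> Hom B (tens B W X) (T Y)"
  shows "cmp B (cmp B (kext h) (sigma W X)) (tensm B g (idt B (T X)))
       = cmp B (kext (cmp B h (tensm B g (idt B X)))) (sigma Z X)"
proof -
  have C: "category B" using M by (rule monoidal_category)
  have Z: "Z \<in> Ob B" and W: "W \<in> Ob B" using cat_dom_ob[OF C g] cat_cod_ob[OF C g] .
  have gX: "tensm B g (idt B X) \<in> Hom B (tens B Z X) (tens B W X)"
    using monoidal_tensm_hom[OF M g cat_idt_hom[OF C X]] .
  have gTX: "tensm B g (idt B (T X)) \<in> Hom B (tens B Z (T X)) (tens B W (T X))"
    using monoidal_tensm_hom[OF M g cat_idt_hom[OF C T_ob[OF X]]] .
  have etaWX: "eta (tens B W X) \<in> Hom B (tens B W X) (T (tens B W X))"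
    using eta_hom[OF monoidal_tens_ob[OF M W X]] .
  define e where "e = cmp B (eta (tens B W X)) (tensm B g (idt B X))"
  have e: "e \<in> Hom B (tens B Z X) (T (tens B W X))"
    unfolding e_def using cat_cmp_hom[OF C gX etaWX] .
  have "cmp B (cmp B (kext h) (sigma W X)) (tensm B g (idt B (T X)))
      = cmp B (kext h) (cmp B (kext e) (sigma Z X))"
    using cat_assoc[OF C gTX sigma_hom[OF W X] kext_hom[OF h]] sigma_natural[OF g X]
    unfolding e_def by simp
  also have "\<dots> = cmp B (kext (cmp B (kext h) e)) (sigma Z X)"
    using cat_assoc[OF C sigma_hom[OF Z X] kext_hom[OF e] kext_hom[OF h]] kext_cmp[OF e h] by simp
  also have "cmp B (kext h) e = cmp B h (tensm B g (idt B X))"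
    unfolding e_def using cat_assoc[OF C gX etaWX kext_hom[OF h]] kext_eta[OF h] by simp
  finally show ?thesis .
qed

lemma kl_radj_transpose:
  assumes closed: "sym_monoidal_closed B ihom ev" and X: "X \<in> Ob B" and Y: "Y \<in> Ob B"
    and Z: "Z \<in> Ob B" and f: "f \<in> Hom B (tens B Z X) (T Y)"
  shows "cmp B (kl B ihom ev T kext sigma X Y)
           (tensm B (radj_transpose B X (ihom X) (ev X) Z (T Y) f) (idt B (T X)))
       = cmp B (kext f) (sigma Z X)"
proof -
  have M: "monoidal B" using closed by (rule sym_monoidal_closed_monoidal)
  note adj = sym_monoidal_closed_adj[OF closed X]
  have evXY: "ev X (T Y) \<in> Hom B (tens B (ihom X (T Y)) X) (T Y)"
    using is_right_adj_counit[OF adj T_ob[OF Y]] by blast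
  show ?thesis
    unfolding kl_def
    using kext_sigma_natural[OF M radj_transpose_hom[OF M adj X Z f] X evXY]
      radj_transpose_counit[OF M adj X Z f]
    by simp
qed

end

lemma functor_ob: "is_functor C D Fo Fm \<Longrightarrow> X \<in> Ob C \<Longrightarrow> Fo X \<in> Ob D"
  unfolding is_functor_def by blast

lemma functor_hom: "is_functor C D Fo Fm \<Longrightarrow> f \<in> Hom C X Y \<Longrightarrow> Fm f \<in> Hom D (Fo X) (Fo Y)"
  unfolding is_functor_def by blast

lemma functor_idt: "is_functor C D Fo Fm \<Longrightarrow> X \<in> Ob C \<Longrightarrow> Fm (idt C X) = idt D (Fo X)"
  unfolding is_functor_def by blast

lemma functor_cmp:
  "is_functor C D Fo Fm \<Longrightarrow> f \<in> Hom C X Y \<Longrightarrow> g \<in> Hom C Y Z \<Longrightarrow> Fm (cmp C g f) = cmp D (Fm g) (Fm f)"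
  unfolding is_functor_def by blast

lemma strict_monoidal_functor_is_functor:
  "strict_sym_monoidal_functor C D Fo Fm \<Longrightarrow> is_functor C D Fo Fm"
  unfolding strict_sym_monoidal_functor_def by blast

lemma strict_monoidal_functor_tunit:
  "strict_sym_monoidal_functor C D Fo Fm \<Longrightarrow> Fo (tunit C) = tunit D"
  unfolding strict_sym_monoidal_functor_def by blast

lemma strict_monoidal_functor_tensm:
  "strict_sym_monoidal_functor C D Fo Fm \<Longrightarrow> f \<in> Hom C X X' \<Longrightarrow> g \<in> Hom C Y Y' \<Longrightarrow>
    Fm (tensm C f g) = tensm D (Fm f) (Fm g)"
  unfolding strict_sym_monoidal_functor_def by blast

lemma strict_monoidal_functor_lu:
  "strict_sym_monoidal_functor C D Fo Fm \<Longrightarrow> X \<in> Ob C \<Longrightarrow> Fm (lu C X) = lu D (Fo X)"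
  unfolding strict_sym_monoidal_functor_def by blast

lemma lifts_pm: "g \<in> Hom E X Y \<Longrightarrow> lifts E pm X Y (pm g)"
  unfolding lifts_def by blast

lemma lifts_idt:
  "category E \<Longrightarrow> is_functor E B po pm \<Longrightarrow> X \<in> Ob E \<Longrightarrow> lifts E pm X X (idt B (po X))"
  unfolding lifts_def by (metis cat_idt_hom functor_idt)

lemma lifts_cmp:
  assumes "category E" "is_functor E B po pm" "lifts E pm X Y f" "lifts E pm Y Z g"
  shows "lifts E pm X Z (cmp B g f)"
  using assms unfolding lifts_def by (metis cat_cmp_hom functor_cmp)

lemma lifts_tensm:
  assumes "monoidal E" "strict_sym_monoidal_functor E B po pm"
    and "lifts E pm X X' f" "lifts E pm Y Y' g"
  shows "lifts E pm (tens E X Y) (tens E X' Y') (tensm B f g)"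
  using assms unfolding lifts_def by (metis monoidal_tensm_hom strict_monoidal_functor_tensm)

lemma lifts_idt_of_lifts_lu:
  assumes M: "monoidal E" and p: "strict_sym_monoidal_functor E B po pm" and W: "W \<in> Ob E"
    and lu: "lifts E pm (tens E (tunit E) W) V (lu B (po W))"
  shows "lifts E pm W V (idt B (po W))"
proof -
  have C: "category E" using M by (rule monoidal_category)
  note F = strict_monoidal_functor_is_functor[OF p]
  obtain k where k: "k \<in> Hom E W (tens E (tunit E) W)" and inv: "cmp E (lu E W) k = idt E W"
    using monoidal_lu_iso[OF M W] unfolding iso_in_def by blast
  have luW: "lu E W \<in> Hom E (tens E (tunit E) W) W"
    using monoidal_lu_iso[OF M W] unfolding iso_in_def by blast
  have "cmp B (lu B (po W)) (pm k) = idt B (po W)"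
    using functor_cmp[OF F k luW] inv functor_idt[OF F W] strict_monoidal_functor_lu[OF p W]
    by simp
  then show ?thesis using lifts_cmp[OF C F lifts_pm[OF k] lu] by simp
qed

locale weakly_closed_refinement =
  fixes B :: "('bo,'bm) mcat" and ihom :: "'bo \<Rightarrow> 'bo \<Rightarrow> 'bo" and ev :: "'bo \<Rightarrow> 'bo \<Rightarrow> 'bm"
    and E :: "('eo,'em) mcat" and po :: "'eo \<Rightarrow> 'bo" and pm :: "'em \<Rightarrow> 'bm"
    and Lo :: "'bo \<Rightarrow> 'eo" and Lm :: "'bm \<Rightarrow> 'em"
    and pitch :: "'bo \<Rightarrow> 'eo \<Rightarrow> 'eo" and evE :: "'bo \<Rightarrow> 'eo \<Rightarrow> 'em"
  assumes refinement: "wc_refinement B ihom ev E po pm Lo Lm pitch evE"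
begin

lemma B_closed: "sym_monoidal_closed B ihom ev"
  using refinement unfolding wc_refinement_def by blast

lemma B_monoidal: "monoidal B"
  using B_closed by (rule sym_monoidal_closed_monoidal)

lemma E_monoidal: "monoidal E"
  using refinement unfolding wc_refinement_def symmetric_monoidal_def by blast

lemma E_category: "category E"
  using E_monoidal by (rule monoidal_category)

lemma p_strict: "strict_sym_monoidal_functor E B po pm"
  using refinement unfolding wc_refinement_def by blast

lemma p_functor: "is_functor E B po pm"
  using p_strict by (rule strict_monoidal_functor_is_functor)

lemma po_ob: "X \<in> Ob E \<Longrightarrow> po X \<in> Ob B"
  using p_functor by (rule functor_ob)

lemma L_functor: "is_functor B E Lo Lm"
  using refinement unfolding wc_refinement_def by blast

lemma Lo_ob: "X \<in> Ob B \<Longrightarrow> Lo X \<in> Ob E"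
  using L_functor by (rule functor_ob)

lemma po_Lo: "X \<in> Ob B \<Longrightarrow> po (Lo X) = X"
  using refinement unfolding wc_refinement_def by auto

lemma lifts_from_Lo: "X \<in> Ob B \<Longrightarrow> A \<in> Ob E \<Longrightarrow> f \<in> Hom B X (po A) \<Longrightarrow> lifts E pm (Lo X) A f"
  using refinement unfolding wc_refinement_def lifts_def by (elim conjE) (meson ex1_implies_ex)

lemma E_adj: "X \<in> Ob B \<Longrightarrow> is_right_adj E (Lo X) (pitch X) (evE X)"
  using refinement unfolding wc_refinement_def by blast

lemma po_tens_Lo: "X \<in> Ob B \<Longrightarrow> Z \<in> Ob E \<Longrightarrow> po (tens E Z (Lo X)) = tens B (po Z) X"
  using refinement unfolding wc_refinement_def by blast

lemma po_pitch: "X \<in> Ob B \<Longrightarrow> A \<in> Ob E \<Longrightarrow> po (pitch X A) = ihom X (po A)"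
  using refinement unfolding wc_refinement_def by blast

lemma pm_radj_map:
  "X \<in> Ob B \<Longrightarrow> h \<in> Hom E A A' \<Longrightarrow>
    pm (radj_map E (Lo X) (pitch X) (evE X) A A' h)
      = radj_map B X (ihom X) (ev X) (po A) (po A') (pm h)"
  using refinement unfolding wc_refinement_def by auto

lemma pm_radj_unit:
  "X \<in> Ob B \<Longrightarrow> Z \<in> Ob E \<Longrightarrow>
    pm (radj_unit E (Lo X) (pitch X) (evE X) Z) = radj_unit B X (ihom X) (ev X) (po Z)"
  using refinement unfolding wc_refinement_def by auto

lemma pm_radj_transpose:
  assumes X: "X \<in> Ob B" and Z: "Z \<in> Ob E" and g: "g \<in> Hom E (tens E Z (Lo X)) A"
  shows "pm (radj_transpose E (Lo X) (pitch X) (evE X) Z A g)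
       = radj_transpose B X (ihom X) (ev X) (po Z) (po A) (pm g)"
  unfolding radj_transpose_def
  using functor_cmp[OF p_functor conjunct1[OF radj_unit_spec[OF E_monoidal E_adj[OF X] Lo_ob[OF X] Z]]
      conjunct1[OF radj_map_spec[OF E_category E_adj[OF X] g]]]
    pm_radj_map[OF X g] pm_radj_unit[OF X Z] po_tens_Lo[OF X Z]
  by simp

text \<open>The counit is preserved because its transpose, the identity, is.\<close>
lemma pm_evE:
  assumes X: "X \<in> Ob B" and A: "A \<in> Ob E"
  shows "pm (evE X A) = ev X (po A)"
proof -
  note adjB = sym_monoidal_closed_adj[OF B_closed X] and adjE = E_adj[OF X]
  have P: "pitch X A \<in> Ob E" and evE: "evE X A \<in> Hom E (tens E (pitch X A) (Lo X)) A"
    using is_right_adj_counit[OF adjE A] by auto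
  have poP: "po (pitch X A) = ihom X (po A)" using po_pitch[OF X A] .
  have evB: "ev X (po A) \<in> Hom B (tens B (ihom X (po A)) X) (po A)"
    using is_right_adj_counit[OF adjB po_ob[OF A]] by blast
  have ihom_ob: "ihom X (po A) \<in> Ob B" using poP po_ob[OF P] by simp
  have pm_evE_hom: "pm (evE X A) \<in> Hom B (tens B (ihom X (po A)) X) (po A)"
    using functor_hom[OF p_functor evE] po_tens_Lo[OF X P] poP by simp
  have "radj_transpose B X (ihom X) (ev X) (ihom X (po A)) (po A) (pm (evE X A))
      = pm (radj_transpose E (Lo X) (pitch X) (evE X) (pitch X A) A (evE X A))"
    using pm_radj_transpose[OF X P evE] poP by simp
  also have "\<dots> = idt B (ihom X (po A))"
    using radj_transpose_counit_self[OF E_monoidal adjE Lo_ob[OF X] A]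
      functor_idt[OF p_functor P] poP by simp
  finally have "pm (evE X A) = cmp B (ev X (po A)) (tensm B (idt B (ihom X (po A))) (idt B X))"
    using radj_transpose_counit[OF B_monoidal adjB X ihom_ob pm_evE_hom] by simp
  also have "\<dots> = ev X (po A)"
    using monoidal_tensm_idt[OF B_monoidal ihom_ob X] cat_idt_right[OF monoidal_category[OF B_monoidal] evB]
    by simp
  finally show ?thesis .
qed

lemma lifts_ev: "X \<in> Ob B \<Longrightarrow> A \<in> Ob E \<Longrightarrow> lifts E pm (tens E (pitch X A) (Lo X)) A (ev X (po A))"
  using lifts_pm is_right_adj_counit[OF E_adj] pm_evE by metis

lemma lifts_radj_transpose:
  assumes X: "X \<in> Ob B" and Z: "Z \<in> Ob E" and f: "lifts E pm (tens E Z (Lo X)) A f"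
  shows "lifts E pm Z (pitch X A) (radj_transpose B X (ihom X) (ev X) (po Z) (po A) f)"
proof -
  obtain g where g: "g \<in> Hom E (tens E Z (Lo X)) A" and "pm g = f"
    using f unfolding lifts_def by blast
  then show ?thesis
    using lifts_pm[OF radj_transpose_hom[OF E_monoidal E_adj[OF X] Lo_ob[OF X] Z g], of pm]
      pm_radj_transpose[OF X Z g] by simp
qed

end

section \<open>Liftings versus assignments\<close>

lemma BLift_ob:
  "Td \<in> BLift B E po pm Lo T kext sigma le mult \<Longrightarrow> X \<in> Ob E \<Longrightarrow>
    Td a X \<in> Ob E \<and> po (Td a X) = T (po X)"
  unfolding BLift_def ord_mem_def by blast

lemma BLift_mono:
  "Td \<in> BLift B E po pm Lo T kext sigma le mult \<Longrightarrow> le a b \<Longrightarrow>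
    ord_le B E pm (Ob E) (\<lambda>X. T (po X)) (Td a) (Td b)"
  unfolding BLift_def by blast

lemma BLift_ext:
  assumes "Td \<in> BLift B E po pm Lo T kext sigma le mult"
    and "X \<in> Ob E" "Y \<in> Ob E" "Z \<in> Ob E"
    and "f \<in> Hom B (tens B (po Z) (po X)) (T (po Y))"
    and "lifts E pm (tens E Z (Lo (po X))) (Td a Y) f"
  shows "lifts E pm (tens E Z (Td b X)) (Td (mult b a) Y) (cmp B (kext f) (sigma (po Z) (po X)))"
  using assms unfolding BLift_def by blast

lemma Asign_ob:
  "D \<in> Asign B ihom ev E po pm pitch T kext sigma le mult \<Longrightarrow> X \<in> Ob B \<Longrightarrow>
    D a X \<in> Ob E \<and> po (D a X) = T X"
  unfolding Asign_def ord_mem_def by blast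

lemma Asign_mono:
  "D \<in> Asign B ihom ev E po pm pitch T kext sigma le mult \<Longrightarrow> le a b \<Longrightarrow>
    ord_le B E pm (Ob B) T (D a) (D b)"
  unfolding Asign_def by blast

lemma Asign_kl:
  "D \<in> Asign B ihom ev E po pm pitch T kext sigma le mult \<Longrightarrow> X \<in> Ob B \<Longrightarrow> Y \<in> Ob B \<Longrightarrow>
    lifts E pm (tens E (pitch X (D a Y)) (D b X)) (D (mult b a) Y) (kl B ihom ev T kext sigma X Y)"
  unfolding Asign_def by blast

locale graded_refinement = weakly_closed_refinement +
  fixes T :: "'bo \<Rightarrow> 'bo" and eta :: "'bo \<Rightarrow> 'bm" and kext :: "'bm \<Rightarrow> 'bm"
    and sigma :: "'bo \<Rightarrow> 'bo \<Rightarrow> 'bm"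
    and le :: "'g \<Rightarrow> 'g \<Rightarrow> bool" and one :: 'g and mult :: "'g \<Rightarrow> 'g \<Rightarrow> 'g"
  assumes monad: "strong_monad B T eta kext sigma"
    and monoid: "preordered_monoid le one mult"
begin

lemma BLift_fibre_invariant:
  assumes Td: "Td \<in> BLift B E po pm Lo T kext sigma le mult"
    and X: "X \<in> Ob E" and Y: "Y \<in> Ob E" and XY: "po X = po Y"
  shows "lifts E pm (Td b X) (Td b Y) (idt B (T (po X)))"
proof -
  define pX where "pX = po X"
  have pX: "pX \<in> Ob B" unfolding pX_def using po_ob[OF X] .
  have LX: "Lo pX \<in> Ob E" using Lo_ob[OF pX] .
  have TY: "Td one Y \<in> Ob E" "po (Td one Y) = T pX"
    using BLift_ob[OF Td Y] XY unfolding pX_def by auto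
  have luE: "lu E (Lo pX) \<in> Hom E (tens E (tunit E) (Lo pX)) (Lo pX)"
    using monoidal_lu_iso[OF E_monoidal LX] unfolding iso_in_def by blast
  have luB: "lu B pX \<in> Hom B (tens B (tunit B) pX) pX"
    using monoidal_lu_iso[OF B_monoidal pX] unfolding iso_in_def by blast
  have unit_hom: "cmp B (eta pX) (lu B pX) \<in> Hom B (tens B (po (tunit E)) (po X)) (T (po Y))"
    using cat_cmp_hom[OF monoidal_category[OF B_monoidal] luB eta_hom[OF monad pX]]
      strict_monoidal_functor_tunit[OF p_strict] XY unfolding pX_def by simp
  have "lifts E pm (tens E (tunit E) (Lo pX)) (Td one Y) (cmp B (eta pX) (lu B pX))"
    using lifts_cmp[OF E_category p_functor lifts_pm[OF luE]
        lifts_from_Lo[OF pX TY(1)]] eta_hom[OF monad pX] TY(2)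
      strict_monoidal_functor_lu[OF p_strict LX] po_Lo[OF pX]
    by simp
  then have "lifts E pm (tens E (tunit E) (Td b X)) (Td (mult b one) Y)
      (cmp B (kext (cmp B (eta pX) (lu B pX))) (sigma (po (tunit E)) pX))"
    using BLift_ext[OF Td X Y monoidal_tunit_ob[OF E_monoidal] unit_hom] unfolding pX_def by simp
  moreover have "mult b one = b" using monoid unfolding preordered_monoid_def by simp
  ultimately have "lifts E pm (tens E (tunit E) (Td b X)) (Td b Y) (lu B (po (Td b X)))"
    using sigma_lu[OF monad pX] strict_monoidal_functor_tunit[OF p_strict] BLift_ob[OF Td X]
    unfolding pX_def by simp
  then show ?thesis
    using lifts_idt_of_lifts_lu[OF E_monoidal p_strict] BLift_ob[OF Td X] by metis
qed

lemma Asign_of_BLift: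
  assumes Td: "Td \<in> BLift B E po pm Lo T kext sigma le mult"
  shows "(\<lambda>a X. Td a (Lo X)) \<in> Asign B ihom ev E po pm pitch T kext sigma le mult"
proof -
  have kl: "lifts E pm (tens E (pitch X (Td a (Lo Y))) (Td b (Lo X))) (Td (mult b a) (Lo Y))
      (kl B ihom ev T kext sigma X Y)" if X: "X \<in> Ob B" and Y: "Y \<in> Ob B" for a b X Y
  proof -
    define A where "A = Td a (Lo Y)"
    have A: "A \<in> Ob E" "po A = T Y"
      using BLift_ob[OF Td Lo_ob[OF Y]] po_Lo[OF Y] unfolding A_def by auto
    have P: "pitch X A \<in> Ob E" and poP: "po (pitch X A) = ihom X (T Y)"
      using is_right_adj_counit[OF E_adj[OF X] A(1)] po_pitch[OF X A(1)] A(2) by auto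
    have "ev X (T Y) \<in> Hom B (tens B (po (pitch X A)) (po (Lo X))) (T (po (Lo Y)))"
      using is_right_adj_counit[OF sym_monoidal_closed_adj[OF B_closed X] T_ob[OF monad Y]]
        poP po_Lo[OF X] po_Lo[OF Y] by simp
    from BLift_ext[OF Td Lo_ob[OF X] Lo_ob[OF Y] P this]
    show ?thesis
      using lifts_ev[OF X A(1)] A(2) poP po_Lo[OF X] unfolding kl_def A_def by simp
  qed
  then show ?thesis
    unfolding Asign_def ord_mem_def ord_le_def
    using BLift_ob[OF Td Lo_ob] BLift_mono[OF Td, unfolded ord_le_def] Lo_ob po_Lo by fastforce
qed

lemma BLift_of_Asign:
  assumes D: "D \<in> Asign B ihom ev E po pm pitch T kext sigma le mult"
  shows "(\<lambda>a Y. D a (po Y)) \<in> BLift B E po pm Lo T kext sigma le mult"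
proof -
  have ext: "lifts E pm (tens E Z (D b (po X))) (D (mult b a) (po Y))
      (cmp B (kext f) (sigma (po Z) (po X)))"
    if X: "X \<in> Ob E" and Y: "Y \<in> Ob E" and Z: "Z \<in> Ob E"
      and f: "f \<in> Hom B (tens B (po Z) (po X)) (T (po Y))"
      and f_lifts: "lifts E pm (tens E Z (Lo (po X))) (D a (po Y)) f" for a b X Y Z f
  proof -
    define t where "t = radj_transpose B (po X) (ihom (po X)) (ev (po X)) (po Z) (T (po Y)) f"
    have "lifts E pm Z (pitch (po X) (D a (po Y))) t"
      using lifts_radj_transpose[OF po_ob[OF X] Z f_lifts] Asign_ob[OF D po_ob[OF Y]]
      unfolding t_def by simp
    moreover have "lifts E pm (D b (po X)) (D b (po X)) (idt B (T (po X)))"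
      using lifts_idt[OF E_category p_functor] Asign_ob[OF D po_ob[OF X]] by metis
    ultimately have "lifts E pm (tens E Z (D b (po X))) (D (mult b a) (po Y))
        (cmp B (kl B ihom ev T kext sigma (po X) (po Y)) (tensm B t (idt B (T (po X)))))"
      using lifts_cmp[OF E_category p_functor lifts_tensm[OF E_monoidal p_strict]
          Asign_kl[OF D po_ob[OF X] po_ob[OF Y]]] by blast
    then show ?thesis
      using kl_radj_transpose[OF monad B_closed po_ob[OF X] po_ob[OF Y] po_ob[OF Z] f]
      unfolding t_def by simp
  qed
  then show ?thesis
    unfolding BLift_def ord_mem_def ord_le_def
    using Asign_ob[OF D po_ob] Asign_mono[OF D, unfolded ord_le_def] po_ob by simp
qed

lemma asign_le_restrict:
  "blift_le B E po pm T Td Td' \<Longrightarrow>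
    asign_le B E pm T (\<lambda>a X. Td a (Lo X)) (\<lambda>a X. Td' a (Lo X))"
  using Lo_ob po_Lo unfolding blift_le_def asign_le_def ord_le_def by fastforce

lemma blift_le_extend:
  "asign_le B E pm T D D' \<Longrightarrow> blift_le B E po pm T (\<lambda>a Y. D a (po Y)) (\<lambda>a Y. D' a (po Y))"
  using po_ob unfolding blift_le_def asign_le_def ord_le_def by fastforce

lemma BLift_extend_restrict:
  assumes "Td \<in> BLift B E po pm Lo T kext sigma le mult"
  shows "blift_le B E po pm T (\<lambda>a Y. Td a (Lo (po Y))) Td \<and>
    blift_le B E po pm T Td (\<lambda>a Y. Td a (Lo (po Y)))"
  using BLift_fibre_invariant[OF assms] Lo_ob po_ob po_Lo
  unfolding blift_le_def ord_le_def by (metis (no_types, lifting))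

lemma Asign_restrict_extend:
  assumes "D \<in> Asign B ihom ev E po pm pitch T kext sigma le mult"
  shows "asign_le B E pm T (\<lambda>a X. D a (po (Lo X))) D \<and>
    asign_le B E pm T D (\<lambda>a X. D a (po (Lo X)))"
  using lifts_idt[OF E_category p_functor] Asign_ob[OF assms] po_Lo
  unfolding asign_le_def ord_le_def by metis

end

theorem theorem3:
  fixes B :: "('bo,'bm) mcat" and ihom :: "'bo \<Rightarrow> 'bo \<Rightarrow> 'bo" and ev :: "'bo \<Rightarrow> 'bo \<Rightarrow> 'bm"
    and E :: "('eo,'em) mcat" and po :: "'eo \<Rightarrow> 'bo" and pm :: "'em \<Rightarrow> 'bm"
    and Lo :: "'bo \<Rightarrow> 'eo" and Lm :: "'bm \<Rightarrow> 'em"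
    and pitch :: "'bo \<Rightarrow> 'eo \<Rightarrow> 'eo" and evE :: "'bo \<Rightarrow> 'eo \<Rightarrow> 'em"
    and T :: "'bo \<Rightarrow> 'bo" and eta :: "'bo \<Rightarrow> 'bm" and kext :: "'bm \<Rightarrow> 'bm"
    and sigma :: "'bo \<Rightarrow> 'bo \<Rightarrow> 'bm"
    and le :: "'g \<Rightarrow> 'g \<Rightarrow> bool" and one :: 'g and mult :: "'g \<Rightarrow> 'g \<Rightarrow> 'g"
  assumes "wc_refinement B ihom ev E po pm Lo Lm pitch evE"
    and "strong_monad B T eta kext sigma"
    and "preordered_monoid le one mult"
  shows "preorder_equiv
           (BLift B E po pm Lo T kext sigma le mult) (blift_le B E po pm T)
           (Asign B ihom ev E po pm pitch T kext sigma le mult) (asign_le B E pm T)"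
proof -
  interpret graded_refinement B ihom ev E po pm Lo Lm pitch evE T eta kext sigma le one mult
    using assms by (intro graded_refinement.intro weakly_closed_refinement.intro
        graded_refinement_axioms.intro)
  show ?thesis
    unfolding preorder_equiv_def
    using Asign_of_BLift BLift_of_Asign asign_le_restrict blift_le_extend
      BLift_extend_restrict Asign_restrict_extend
    by (intro exI[of _ "\<lambda>Td a X. Td a (Lo X)"] exI[of _ "\<lambda>D a Y. D a (po Y)"]) blast
qed

end
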